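(* Let $p$ be an odd prime, $\tau\in\mathbb{Z}$, and let $m=p^\alpha a$, $l=p^\beta b$ with $a,b$ positive integers not divisible by $p$, $\alpha\geq1$, $\beta\geq0$. Then \[ p^{2\alpha}\ \Big|\ \binom{m}{l}\binom{m\tau+l-1}{m-1}-\binom{m/p}{l/p}\binom{\frac{m\tau+l}{p}-1}{\frac{m}{p}-1}, \] where for $\beta=0$ the second term is defined to be zero.
   Context: Binomial coefficients with negative top argument are defined by $\binom{n}{k}=(-1)^k\binom{-n+k-1}{k}$ for $n<0$, $k\geq0$; for $n\geq0$ they are the usual ones (zero when $k>n$). *)

theory Defs
  imports Main "HOL-Computational_Algebra.Primes"
begin

definition ibinom :: "int \<Rightarrow> nat \<Rightarrow> int" where
  "ibinom n k = (if n \<ge> 0 then int (nat n choose k)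
                 else (-1) ^ k * int (nat (- n + int k - 1) choose k))"

end

(*
  Write m = pM, l = pL and S = M\<tau> + L. Removing the multiples of p from the falling
  factorials gives binom(pX, pK) F(K) = binom(X, K) F(X), and the same with pX - 1, pK - 1,
  X - 1, K - 1, where F(X) is the product of the pX - i over 0 \<le> i < pK with p not dividing i.
  Pairing i with pK - i (p is odd) shows F(X) \<equiv> F(K) modulo p\<^sup>2 X (X - K).  The absorption
  identities turn the factors M - L, S - M and S into multiples of M, so p\<^sup>2 M\<^sup>2 divides the
  difference times the p-adic unit F(L) F(M).  For \<beta> = 0 each binomial is divisible by p^\<alpha>
  by absorption alone.
*)
theory Submission
  imports Defs Complex_Main "HOL-Number_Theory.Cong"
begin

lemma of_int_ibinom: "(of_int (ibinom x k) :: 'a :: field_char_0) = of_int x gchoose k"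
proof (cases "x \<ge> 0")
  case True
  then have "(of_int (ibinom x k) :: 'a) = of_nat (nat x) gchoose k"
    by (simp add: ibinom_def binomial_gbinomial)
  with True show ?thesis by simp
next
  case False
  then have "(of_int (ibinom x k) :: 'a) = (-1) ^ k * (of_nat (nat (- x + int k - 1)) gchoose k)"
    by (simp add: ibinom_def binomial_gbinomial)
  also have "(of_nat (nat (- x + int k - 1)) :: 'a) = of_nat k - of_int x - 1"
    using False by simp
  finally show ?thesis by (simp add: gbinomial_negated_upper[of "of_int x :: 'a" k])
qed

lemma ibinom_mult_fact: "ibinom x k * fact k = (\<Prod>i=0..<k. x - int i)"
proof -
  have "(of_int (ibinom x k * fact k) :: rat) = of_int (\<Prod>i=0..<k. x - int i)"
    by (simp add: of_int_ibinom gbinomial_mult_fact')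
  then show ?thesis by (simp only: of_int_eq_iff)
qed

lemma ibinom_absorb_comp: "(x - int k) * ibinom x k = x * ibinom (x - 1) k"
proof -
  have "(of_int ((x - int k) * ibinom x k) :: rat) = of_int (x * ibinom (x - 1) k)"
    by (simp add: of_int_ibinom gbinomial_absorb_comp)
  then show ?thesis by (simp only: of_int_eq_iff)
qed

lemma ibinom_absorption: "int (Suc k) * ibinom x (Suc k) = x * ibinom (x - 1) k"
proof -
  have "(of_int (int (Suc k) * ibinom x (Suc k)) :: rat) = of_int (x * ibinom (x - 1) k)"
    using gbinomial_absorption[of k "of_int x :: rat"] by (simp add: of_int_ibinom)
  then show ?thesis by (simp only: of_int_eq_iff)
qed

lemma ibinom_rec_Suc: "int (Suc k) * ibinom x (Suc k) = (x - int k) * ibinom x k"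
proof -
  have "(of_int (int (Suc k) * ibinom x (Suc k)) :: rat) = of_int ((x - int k) * ibinom x k)"
    using gbinomial_mult_1[of "of_int x :: rat" k] by (simp add: of_int_ibinom algebra_simps)
  then show ?thesis by (simp only: of_int_eq_iff)
qed

lemma ibinom_shifted_mult_fact:
  "ibinom (x - int s) (k - s) * fact (k - s) = (\<Prod>i=s..<k. x - int i)"
  by (simp add: ibinom_mult_fact prod.atLeastLessThan_shift_0[of _ s k] diff_diff_eq add.commute)

lemma fact_diff_eq_prod: "fact (n - s) = (\<Prod>i=s..<n. int n - int i)"
proof (cases "s \<le> n")
  case True
  then have "ibinom (int n - int s) (n - s) = 1" by (simp add: ibinom_def flip: of_nat_diff)
  then show ?thesis using ibinom_shifted_mult_fact[of "int n" s n] by simp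
qed simp

definition falling_prod_prime_to :: "nat \<Rightarrow> nat \<Rightarrow> int \<Rightarrow> int" where
  "falling_prod_prime_to p n z = (\<Prod>i | i < n \<and> \<not> p dvd i. z - int i)"

lemma prod_split_multiples:
  fixes f :: "nat \<Rightarrow> 'a :: comm_monoid_mult"
  assumes "p > 0" "finite I"
  shows "prod f I = (\<Prod>t | p * t \<in> I. f (p * t)) * (\<Prod>i | i \<in> I \<and> \<not> p dvd i. f i)"
proof -
  have fin: "finite {t. p * t \<in> I}"
    using finite_vimageI[OF assms(2), of "(*) p"] assms(1) by (simp add: inj_on_def vimage_def)
  have "prod f I = prod f ((*) p ` {t. p * t \<in> I} \<union> {i. i \<in> I \<and> \<not> p dvd i})"
    by (rule arg_cong[where f = "prod f"]) auto
  also have "\<dots> = prod f ((*) p ` {t. p * t \<in> I}) * (\<Prod>i | i \<in> I \<and> \<not> p dvd i. f i)"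
    by (rule prod.union_disjoint) (use fin assms(2) in auto)
  also have "prod f ((*) p ` {t. p * t \<in> I}) = (\<Prod>t | p * t \<in> I. f (p * t))"
    using assms(1) by (subst prod.reindex) (auto simp: inj_on_def)
  finally show ?thesis .
qed

lemma falling_prod_split_prime:
  assumes "p > 0" "s \<le> 1"
  shows "(\<Prod>i=s..<p*K. int p * X - int i)
    = int p ^ (K - s) * (\<Prod>t=s..<K. X - int t) * falling_prod_prime_to p (p*K) (int p * X)"
proof -
  have multiples: "{t. p * t \<in> {s..<p*K}} = {s..<K}"
  proof -
    have "p * t \<in> {s..<p*K} \<longleftrightarrow> t \<in> {s..<K}" for t
    proof (cases "t = 0")
      case False
      then have "1 \<le> t" "1 \<le> p * t" using assms(1) by simp_all
      then have "s \<le> t" "s \<le> p * t" using assms(2) by linarith+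
      then show ?thesis using assms(1) by simp
    qed (use assms(1) in simp)
    then show ?thesis by blast
  qed
  have units: "{i. i \<in> {s..<p*K} \<and> \<not> p dvd i} = {i. i < p*K \<and> \<not> p dvd i}"
  proof -
    have "s \<le> i" if "\<not> p dvd i" for i
    proof -
      from that have "i \<noteq> 0" by (metis dvd_0_right)
      then show ?thesis using assms(2) by linarith
    qed
    then show ?thesis by auto
  qed
  have "(\<Prod>i=s..<p*K. int p * X - int i)
      = (\<Prod>t=s..<K. int p * X - int (p * t)) * falling_prod_prime_to p (p*K) (int p * X)"
    using prod_split_multiples[OF assms(1), of "{s..<p*K}" "\<lambda>i. int p * X - int i"]
    unfolding multiples units falling_prod_prime_to_def by simp
  also have "(\<Prod>t=s..<K. int p * X - int (p * t)) = int p ^ (K - s) * (\<Prod>t=s..<K. X - int t)"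
    by (simp add: prod.distrib flip: right_diff_distrib)
  finally show ?thesis .
qed

lemma ibinom_mult_prime_eq:
  assumes "p > 0" "s \<le> 1"
  shows "ibinom (int p * X - int s) (p*K - s) * falling_prod_prime_to p (p*K) (int (p*K))
    = ibinom (X - int s) (K - s) * falling_prod_prime_to p (p*K) (int p * X)"
proof -
  define c where "c = int p ^ (K - s) * fact (K - s)"
  have "ibinom (int p * X - int s) (p*K - s) * fact (p*K - s) = (\<Prod>i=s..<p*K. int p * X - int i)"
    by (rule ibinom_shifted_mult_fact)
  also have "\<dots> = int p ^ (K - s) * (\<Prod>t=s..<K. X - int t) * falling_prod_prime_to p (p*K) (int p * X)"
    by (rule falling_prod_split_prime[OF assms])
  also have "(\<Prod>t=s..<K. X - int t) = ibinom (X - int s) (K - s) * fact (K - s)"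
    by (rule ibinom_shifted_mult_fact[symmetric])
  finally have "ibinom (int p * X - int s) (p*K - s) * fact (p*K - s)
      = c * ibinom (X - int s) (K - s) * falling_prod_prime_to p (p*K) (int p * X)"
    by (simp add: c_def algebra_simps)
  moreover have "fact (p*K - s) = c * falling_prod_prime_to p (p*K) (int (p*K))"
    using falling_prod_split_prime[OF assms, where K = K and X = "int K"]
    by (simp add: fact_diff_eq_prod c_def)
  moreover have "c \<noteq> 0" using assms(1) by (simp add: c_def)
  ultimately show ?thesis by (simp add: algebra_simps)
qed

lemma prod_paired_factors_cong:
  fixes z :: int
  assumes "finite A" and "\<And>i. i \<in> A \<Longrightarrow> i \<le> n \<and> n - i \<in> A \<and> 2 * i \<noteq> n"
  shows "[(\<Prod>i\<in>A. z - int i) = (\<Prod>i\<in>A. int n - int i)] (mod z * (z - int n))"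
  using assms
proof (induction "card A" arbitrary: A rule: less_induct)
  case less
  show ?case
  proof (cases "A = {}")
    case False
    then obtain i where i: "i \<in> A" by blast
    define j where "j = n - i"
    have j: "j \<in> A" "j \<noteq> i" "int i + int j = int n"
      using less.prems(2)[OF i] by (auto simp: j_def)
    define A' where "A' = A - {i, j}"
    have A: "A = insert i (insert j A')" "i \<notin> insert j A'" "j \<notin> A'"
      using i j by (auto simp: A'_def)
    have fin: "finite A'" using less.prems(1) by (simp add: A'_def)
    have "card A' < card A"
      using less.prems(1) i by (auto simp: A'_def intro: psubset_card_mono)
    moreover have "k \<le> n \<and> n - k \<in> A' \<and> 2 * k \<noteq> n" if k: "k \<in> A'" for k
    proof -
      have "k \<in> A" "k \<noteq> i" "k \<noteq> j" using k by (auto simp: A'_def)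
      moreover have "k \<le> n" "n - k \<in> A" "2 * k \<noteq> n" using less.prems(2)[of k] k by (auto simp: A'_def)
      moreover have "i \<le> n" using less.prems(2)[OF i] by simp
      ultimately show ?thesis by (auto simp: A'_def j_def)
    qed
    ultimately have IH: "[(\<Prod>k\<in>A'. z - int k) = (\<Prod>k\<in>A'. int n - int k)] (mod z * (z - int n))"
      using less.hyps fin by blast
    have "(z - int i) * (z - int j) = z * (z - int n) + (int n - int i) * (int n - int j)"
      by (simp add: algebra_simps flip: j(3))
    then have "[(z - int i) * (z - int j) = (int n - int i) * (int n - int j)] (mod z * (z - int n))"
      by (simp add: cong_def)
    from cong_mult[OF this IH] show ?thesis
      using fin A by (simp add: mult.assoc)
  qed simp
qed

lemma falling_prod_prime_to_cong:
  assumes "prime p" "odd p" "p dvd n"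
  shows "[falling_prod_prime_to p n z = falling_prod_prime_to p n (int n)] (mod z * (z - int n))"
  unfolding falling_prod_prime_to_def
proof (rule prod_paired_factors_cong)
  fix i assume i: "i \<in> {i. i < n \<and> \<not> p dvd i}"
  then have "0 < i" by (metis dvd_0_right gr0I mem_Collect_eq)
  have "\<not> p dvd n - i"
    using i assms(3) by (metis dvd_diff_nat diff_diff_cancel less_imp_le mem_Collect_eq)
  moreover have "2 * i \<noteq> n"
  proof
    assume "2 * i = n"
    then have "p dvd 2 * i" using assms(3) by simp
    moreover have "\<not> p dvd 2"
    proof
      assume "p dvd 2"
      then have "p \<le> 2" by (simp add: dvd_imp_le)
      with prime_ge_2_nat[OF assms(1)] assms(2) show False by simp
    qed
    ultimately show False using i assms(1) prime_dvd_mult_nat by blast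
  qed
  ultimately show "i \<le> n \<and> n - i \<in> {i. i < n \<and> \<not> p dvd i} \<and> 2 * i \<noteq> n"
    using i \<open>0 < i\<close> by auto
qed auto

lemma not_prime_dvd_falling_prod_prime_to:
  assumes "prime p" "int p dvd z"
  shows "\<not> int p dvd falling_prod_prime_to p n z"
proof -
  have "\<not> int p dvd z - int i" if "\<not> p dvd i" for i
  proof
    assume "int p dvd z - int i"
    with assms(2) have "int p dvd z - (z - int i)" by (rule dvd_diff)
    with that show False by simp
  qed
  with assms(1) show ?thesis
    by (simp add: falling_prod_prime_to_def prime_dvd_prod_iff)
qed

lemma prime_power_dvd_ibinom:
  fixes q x :: int
  assumes "prime q" "q ^ e dvd x" "\<not> q dvd int k"
  shows "q ^ e dvd ibinom x k"
proof -
  obtain j where k: "k = Suc j" using assms(3) by (cases k) auto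
  have "q ^ e dvd int k * ibinom x k"
    unfolding k ibinom_absorption using assms(2) by simp
  moreover have "coprime (q ^ e) (int k)" using assms(1,3) by (simp add: prime_imp_coprime)
  ultimately show ?thesis by (simp add: coprime_dvd_mult_right_iff)
qed

lemma prime_power_dvd_ibinom_pred:
  fixes q y :: int
  assumes "prime q" "q ^ e dvd int k" "\<not> q dvd y" "k > 0"
  shows "q ^ e dvd ibinom (y - 1) (k - 1)"
proof -
  obtain j where k: "k = Suc j" using assms(4) by (cases k) auto
  have "q ^ e dvd y * ibinom (y - 1) (k - 1)"
    using assms(2) by (simp add: k flip: ibinom_absorption)
  moreover have "coprime (q ^ e) y" using assms(1,3) by (simp add: prime_imp_coprime)
  ultimately show ?thesis by (simp add: coprime_dvd_mult_right_iff)
qed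

lemma prime_sq_dvd_ibinom_mult_falling_diff:
  assumes "prime p" "odd p"
  shows "int p ^ 2 * X ^ 2 dvd ibinom X L *
    (falling_prod_prime_to p (p*L) (int p * X) - falling_prod_prime_to p (p*L) (int (p*L)))"
proof -
  obtain u where u: "falling_prod_prime_to p (p*L) (int p * X) - falling_prod_prime_to p (p*L) (int (p*L))
      = int p * X * (int p * X - int (p*L)) * u"
    using falling_prod_prime_to_cong[OF assms, of "p*L" "int p * X"]
    unfolding cong_iff_dvd_diff dvd_def by blast
  have "ibinom X L * (int p * X * (int p * X - int (p*L)) * u)
      = int p ^ 2 * X * u * ((X - int L) * ibinom X L)"
    by (simp add: algebra_simps power2_eq_square)
  also have "\<dots> = int p ^ 2 * X ^ 2 * (u * ibinom (X - 1) L)"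
    unfolding ibinom_absorb_comp by (simp add: algebra_simps power2_eq_square)
  finally show ?thesis unfolding u by (rule dvdI)
qed

lemma prime_sq_dvd_ibinom_pred_mult_falling_diff:
  assumes "prime p" "odd p" "L > 0" "M > 0" and S: "S = int M * \<tau> + int L"
  shows "int p ^ 2 * int M ^ 2 dvd ibinom (int M) L * ibinom (S - 1) (M - 1) *
    (falling_prod_prime_to p (p*M) (int p * S) - falling_prod_prime_to p (p*M) (int (p*M)))"
proof -
  obtain w where w: "falling_prod_prime_to p (p*M) (int p * S) - falling_prod_prime_to p (p*M) (int (p*M))
      = int p * S * (int p * S - int (p*M)) * w"
    using falling_prod_prime_to_cong[OF assms(1,2), of "p*M" "int p * S"]
    unfolding cong_iff_dvd_diff dvd_def by blast
  have upper: "S * ibinom (int M) L = int M * (\<tau> * ibinom (int M) L + ibinom (int M - 1) (L - 1))"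
    using ibinom_absorption[of "L - 1" "int M"] assms(3) by (simp add: S algebra_simps)
  have lower: "(S - int M) * ibinom (S - 1) (M - 1) = int M * ibinom (S - 1) M"
    using ibinom_rec_Suc[of "M - 1" "S - 1"] assms(4) by simp
  have "ibinom (int M) L * ibinom (S - 1) (M - 1) * (int p * S * (int p * S - int (p*M)) * w)
      = int p ^ 2 * w * (S * ibinom (int M) L) * ((S - int M) * ibinom (S - 1) (M - 1))"
    by (simp add: algebra_simps power2_eq_square)
  also have "\<dots> = int p ^ 2 * int M ^ 2
      * (w * (\<tau> * ibinom (int M) L + ibinom (int M - 1) (L - 1)) * ibinom (S - 1) M)"
    unfolding upper lower by (simp add: algebra_simps power2_eq_square)
  finally show ?thesis unfolding w by (rule dvdI)
qed

lemma prime_sq_dvd_ibinom_prod_diff_mult: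
  assumes "prime p" "odd p" "L > 0" "M > 0" and S: "S = int M * \<tau> + int L"
  shows "int p ^ 2 * int M ^ 2 dvd
    (ibinom (int p * int M) (p*L) * ibinom (int p * S - 1) (p*M - 1)
      - ibinom (int M) L * ibinom (S - 1) (M - 1))
    * (falling_prod_prime_to p (p*L) (int (p*L)) * falling_prod_prime_to p (p*M) (int (p*M)))"
proof -
  have p: "p > 0" using assms(1) prime_gt_0_nat by blast
  define A1 where "A1 = ibinom (int p * int M) (p*L)"
  define B1 where "B1 = ibinom (int M) L"
  define A2 where "A2 = ibinom (int p * S - 1) (p*M - 1)"
  define B2 where "B2 = ibinom (S - 1) (M - 1)"
  define F1 where "F1 = falling_prod_prime_to p (p*L) (int (p*L))"
  define G1 where "G1 = falling_prod_prime_to p (p*L) (int p * int M)"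
  define F2 where "F2 = falling_prod_prime_to p (p*M) (int (p*M))"
  define G2 where "G2 = falling_prod_prime_to p (p*M) (int p * S)"
  have first: "A1 * F1 = B1 * G1"
    using ibinom_mult_prime_eq[OF p, of 0 "int M" L] by (simp add: A1_def B1_def F1_def G1_def)
  have second: "A2 * F2 = B2 * G2"
    using ibinom_mult_prime_eq[OF p, of 1 S M] by (simp add: A2_def B2_def F2_def G2_def)
  have "(A1 * A2 - B1 * B2) * (F1 * F2) = (A1 * F1) * (A2 * F2) - B1 * B2 * F1 * F2"
    by (simp add: algebra_simps)
  also have "\<dots> = (B1 * G1) * (B2 * G2) - B1 * B2 * F1 * F2"
    by (simp only: first second)
  also have "\<dots> = (B1 * (G1 - F1)) * G2 * B2 + F1 * (B1 * B2 * (G2 - F2))"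
    by (simp add: algebra_simps)
  finally have split: "(A1 * A2 - B1 * B2) * (F1 * F2)
      = (B1 * (G1 - F1)) * G2 * B2 + F1 * (B1 * B2 * (G2 - F2))" .
  have "int p ^ 2 * int M ^ 2 dvd B1 * (G1 - F1)"
    using prime_sq_dvd_ibinom_mult_falling_diff[OF assms(1,2), of "int M" L]
    by (simp add: B1_def G1_def F1_def)
  moreover have "int p ^ 2 * int M ^ 2 dvd B1 * B2 * (G2 - F2)"
    using prime_sq_dvd_ibinom_pred_mult_falling_diff[OF assms] by (simp add: B1_def B2_def G2_def F2_def)
  ultimately have "int p ^ 2 * int M ^ 2 dvd (A1 * A2 - B1 * B2) * (F1 * F2)"
    unfolding split by simp
  then show ?thesis by (simp add: A1_def A2_def B1_def B2_def F1_def F2_def)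
qed

lemma prime_power_dvd_ibinom_prod_diff:
  assumes "prime p" "odd p" "L > 0" "M > 0" "p ^ e dvd M" and S: "S = int M * \<tau> + int L"
  shows "int p ^ (2 * Suc e) dvd
    ibinom (int p * int M) (p*L) * ibinom (int p * S - 1) (p*M - 1)
      - ibinom (int M) L * ibinom (S - 1) (M - 1)"
proof -
  define F where "F = falling_prod_prime_to p (p*L) (int (p*L)) * falling_prod_prime_to p (p*M) (int (p*M))"
  have "int p ^ Suc e dvd int p * int M"
    using assms(5) by (simp add: mult_dvd_mono flip: of_nat_power int_dvd_int_iff)
  then have "(int p ^ Suc e) ^ 2 dvd (int p * int M) ^ 2"
    by (rule dvd_power_same)
  then have "int p ^ (2 * Suc e) dvd int p ^ 2 * int M ^ 2"
    by (simp only: power_mult_distrib flip: power_mult mult.commute[of 2])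
  from dvd_trans[OF this prime_sq_dvd_ibinom_prod_diff_mult[OF assms(1-4,6)]]
  have "int p ^ (2 * Suc e) dvd (ibinom (int p * int M) (p*L) * ibinom (int p * S - 1) (p*M - 1)
      - ibinom (int M) L * ibinom (S - 1) (M - 1)) * F"
    by (simp add: F_def)
  moreover have "coprime (int p ^ (2 * Suc e)) F"
    using not_prime_dvd_falling_prod_prime_to[OF assms(1)] assms(1)
    by (simp add: F_def prime_imp_coprime prime_dvd_mult_iff)
  ultimately show ?thesis by (simp add: coprime_dvd_mult_left_iff)
qed

theorem lemma4p7:
  fixes p a b \<alpha> \<beta> m l :: nat and \<tau> :: int
  assumes "prime p" and "odd p"
    and "a > 0" and "b > 0" and "\<not> p dvd a" and "\<not> p dvd b"
    and "\<alpha> \<ge> 1"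
    and "m = p ^ \<alpha> * a" and "l = p ^ \<beta> * b"
  shows "int p ^ (2 * \<alpha>) dvd
           (ibinom (int m) l * ibinom (int m * \<tau> + int l - 1) (m - 1)
            - (if \<beta> = 0 then 0
               else ibinom (int (m div p)) (l div p)
                    * ibinom ((int m * \<tau> + int l) div int p - 1) (m div p - 1)))"
proof (cases "\<beta> = 0")
  case True
  have prime: "prime (int p)" using assms(1) by simp
  have pm: "int p ^ \<alpha> dvd int m" and pl: "\<not> int p dvd int l"
    using assms(6,8,9) True by simp_all
  moreover have "\<not> int p dvd int m * \<tau> + int l"
  proof -
    have "int p dvd int p ^ \<alpha>" using assms(7) by (cases \<alpha>) simp_all
    then have "int p dvd int m" using pm by (rule dvd_trans)
    then show ?thesis using pl by (simp add: dvd_add_right_iff)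
  qed
  moreover have "m > 0" using assms(1,3,8) prime_gt_0_nat by simp
  ultimately have "int p ^ \<alpha> * int p ^ \<alpha> dvd ibinom (int m) l * ibinom (int m * \<tau> + int l - 1) (m - 1)"
    using prime_power_dvd_ibinom[OF prime] prime_power_dvd_ibinom_pred[OF prime] by (intro mult_dvd_mono)
  with True show ?thesis by (simp add: mult_2 power_add)
next
  case False
  define M L where "M = p ^ (\<alpha> - 1) * a" and "L = p ^ (\<beta> - 1) * b"
  have p: "p > 0" using assms(1) prime_gt_0_nat by blast
  have m: "m = p * M" and l: "l = p * L"
    using assms(7-9) False by (simp_all add: M_def L_def power_eq_if)
  have "M > 0" "L > 0" "p ^ (\<alpha> - 1) dvd M" using assms(3,4) p by (simp_all add: M_def L_def)
  from prime_power_dvd_ibinom_prod_diff[OF assms(1,2) \<open>L > 0\<close> this(1,3) refl, of \<tau>]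
  show ?thesis using False assms(7) p
    by (simp add: m l algebra_simps)
qed

end
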